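(* Let $z\ge1$, $X\subset[\Delta]^d$ finite, and let $C\subseteq X$ be a constant-factor approximation to the optimal $(k,z)$-medoids clustering on $X$. For a point $x\in X$, let $u$ be a center of $C$ closest to $x$ (ties broken arbitrarily). Then for any center $c\in C\setminus\{u\}$, \[\min_{p\in C\cup\{x\}\setminus\{c\}}\|c-p\|_2^z\le\min_{p\in C\setminus\{c\}}\|c-p\|_2^z\le2^{z+1}\min_{p\in C\cup\{x\}\setminus\{c\}}\|c-p\|_2^z.\]
   Context: The $(k,z)$-medoids clustering problem on $X$ asks for a set $C\subseteq X$ with $|C|\le k$ minimizing $\sum_{y\in X}\min_{c\in C}\|y-c\|_2^z$. *)

theory Defs
  imports "HOL-Analysis.Analysis"
begin

definition grid :: "nat \<Rightarrow> (real^'d) set" where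
  "grid \<Delta> = {x. \<forall>i. x $ i \<in> real ` {1..\<Delta>}}"

definition medoid_cost :: "real \<Rightarrow> (real^'d) set \<Rightarrow> (real^'d) set \<Rightarrow> real" where
  "medoid_cost z X C = (\<Sum>y\<in>X. Min ((\<lambda>c. norm (y - c) powr z) ` C))"

definition opt_medoid_cost :: "nat \<Rightarrow> real \<Rightarrow> (real^'d) set \<Rightarrow> real" where
  "opt_medoid_cost k z X =
     (INF C\<in>{C. C \<subseteq> X \<and> C \<noteq> {} \<and> card C \<le> k}. medoid_cost z X C)"

definition approx_medoids :: "real \<Rightarrow> nat \<Rightarrow> real \<Rightarrow> (real^'d) set \<Rightarrow> (real^'d) set \<Rightarrow> bool" where
  "approx_medoids \<alpha> k z X C \<longleftrightarrow>
     C \<subseteq> X \<and> C \<noteq> {} \<and> card C \<le> k \<and> medoid_cost z X C \<le> \<alpha> * opt_medoid_cost k z X"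

end

theory Submission
  imports Defs
begin

text \<open>
  If u is a center nearest to x, then every other center c satisfies
  |c - u| \<le> |c - x| + |x - u| \<le> 2 |c - x|, so adding x to the candidate
  neighbours of c can shrink the distance from c to its nearest neighbour
  by a factor of at most 2, i.e. the z-th power by at most 2^z.
\<close>

lemma norm_diff_le_twice_if_nearer:
  fixes x u c :: "'a::real_normed_vector"
  assumes "norm (x - u) \<le> norm (x - c)"
  shows "norm (c - u) \<le> 2 * norm (c - x)"
proof -
  have "norm (c - u) \<le> norm (c - x) + norm (x - u)"
    using norm_triangle_ineq[of "c - x" "x - u"] by simp
  also have "\<dots> \<le> 2 * norm (c - x)"
    using assms by (simp add: norm_minus_commute)
  finally show ?thesis .
qed

lemma norm_diff_powr_le_if_nearer:
  fixes x u c :: "'a::real_normed_vector"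
  assumes "norm (x - u) \<le> norm (x - c)" and "0 \<le> z"
  shows "norm (c - u) powr z \<le> 2 powr z * norm (c - x) powr z"
proof -
  have "norm (c - u) powr z \<le> (2 * norm (c - x)) powr z"
    using norm_diff_le_twice_if_nearer[OF assms(1)] assms(2) by (intro powr_mono2) auto
  then show ?thesis
    by (simp add: powr_mult)
qed

lemma Min_image_le_mult_Min_image_insert:
  fixes f :: "'a \<Rightarrow> real"
  assumes "finite B" and "A \<subseteq> B" and "B \<subseteq> insert x A"
    and "a \<in> A" and "f a \<le> K * f x"
    and "1 \<le> K" and "\<And>b. b \<in> B \<Longrightarrow> 0 \<le> f b"
  shows "Min (f ` A) \<le> K * Min (f ` B)"
proof -
  have "finite A"
    using assms(1,2) finite_subset by blast
  have "Min (f ` B) \<in> f ` B"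
    using assms(1,2,4) by (intro Min_in) auto
  then obtain p where "p \<in> B" and p_min: "Min (f ` B) = f p"
    by auto
  have "Min (f ` A) \<le> K * f p"
  proof (cases "p \<in> A")
    case True
    have "Min (f ` A) \<le> f p"
      using \<open>finite A\<close> True by simp
    also have "\<dots> \<le> K * f p"
      using assms(6) assms(7)[OF \<open>p \<in> B\<close>] by (simp add: mult_le_cancel_right1)
    finally show ?thesis .
  next
    case False
    then have "p = x"
      using \<open>p \<in> B\<close> assms(3) by auto
    have "Min (f ` A) \<le> f a"
      using \<open>finite A\<close> assms(4) by simp
    with assms(5) \<open>p = x\<close> show ?thesis
      by simp
  qed
  with p_min show ?thesis
    by simp
qed

theorem lemma3p7:
  fixes X C :: "(real^'d) set" and x u c :: "real^'d"
    and z \<alpha> :: real and k \<Delta> :: nat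
  assumes "z \<ge> 1"
    and "finite X" and "X \<subseteq> grid \<Delta>"
    and "\<alpha> \<ge> 1" and "approx_medoids \<alpha> k z X C"
    and "x \<in> X"
    and "u \<in> C" and "\<forall>c'\<in>C. norm (x - u) \<le> norm (x - c')"
    and "c \<in> C - {u}"
  shows "Min ((\<lambda>p. norm (c - p) powr z) ` ((C \<union> {x}) - {c}))
           \<le> Min ((\<lambda>p. norm (c - p) powr z) ` (C - {c}))
         \<and> Min ((\<lambda>p. norm (c - p) powr z) ` (C - {c}))
           \<le> 2 powr (z + 1) * Min ((\<lambda>p. norm (c - p) powr z) ` ((C \<union> {x}) - {c}))"
proof -
  define f where "f = (\<lambda>p. norm (c - p) powr z)"
  have "finite C"
    using assms(2,5) finite_subset unfolding approx_medoids_def by blast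
  have "u \<in> C - {c}"
    using assms(7,9) by auto
  have "Min (f ` ((C \<union> {x}) - {c})) \<le> Min (f ` (C - {c}))"
    using \<open>finite C\<close> \<open>u \<in> C - {c}\<close> by (intro Min_antimono) auto
  moreover have "f u \<le> 2 powr (z + 1) * f x"
  proof -
    have "f u \<le> 2 powr z * f x"
      unfolding f_def using assms(1,8,9) by (intro norm_diff_powr_le_if_nearer) auto
    also have "\<dots> \<le> 2 powr (z + 1) * f x"
      unfolding f_def by (intro mult_right_mono) auto
    finally show ?thesis .
  qed
  then have "Min (f ` (C - {c})) \<le> 2 powr (z + 1) * Min (f ` ((C \<union> {x}) - {c}))"
    using \<open>finite C\<close> \<open>u \<in> C - {c}\<close> assms(1)
    by (intro Min_image_le_mult_Min_image_insert[where x = x]) (auto simp: f_def ge_one_powr_ge_zero)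
  ultimately show ?thesis
    unfolding f_def by blast
qed

end
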